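(* Let $1<p<2$ and $\alpha\in\mathbb R$, or $p=2$ and $\alpha\le0$. There is $C>0$ such that for all $N\ge1$, $$\sup_{A\subset\mathbb Z,\ |A|\le N}\|S_A\|_{L^p(\log L)^\alpha\to L^p(\log L)^\alpha}\le C\,N^{\frac1p-\frac12}(\log(e+N))^{-\alpha}.$$
   Context: On $\mathbb T\equiv[-\pi,\pi)$: $L^p(\log L)^\alpha(\mathbb T)$ is the Orlicz space $L^\Phi$, $\Phi(t)=\int_0^ts^{p-1}(\log(c+s))^{\alpha p}ds$ ($c>1$ fixed, large enough that $\Phi$ is a Young function), Luxemburg norm. For finite $A\subset\mathbb Z$, $S_A(g)=\sum_{n\in A}\hat g(n)e^{inx}$, where $\hat g(n)$ are the Fourier coefficients of $g\in L^1(\mathbb T)$. *)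

theory Defs
  imports "HOL-Analysis.Analysis"
begin

definition torus :: "real set" where
  "torus = {-pi..<pi}"

definition fourier_coeff :: "(real \<Rightarrow> complex) \<Rightarrow> int \<Rightarrow> complex" where
  "fourier_coeff g n =
     complex_of_real (1 / (2 * pi)) *
       set_lebesgue_integral lborel torus (\<lambda>x. g x * exp (- (\<i> * of_int n * of_real x)))"

definition partial_sum :: "int set \<Rightarrow> (real \<Rightarrow> complex) \<Rightarrow> real \<Rightarrow> complex" where
  "partial_sum A g x = (\<Sum>n\<in>A. fourier_coeff g n * exp (\<i> * of_int n * of_real x))"

definition PhiLlog :: "real \<Rightarrow> real \<Rightarrow> real \<Rightarrow> real \<Rightarrow> real" where
  "PhiLlog p \<alpha> c t = integral {0..t} (\<lambda>s. s powr (p - 1) * (ln (c + s)) powr (\<alpha> * p))"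

definition young_function :: "(real \<Rightarrow> real) \<Rightarrow> bool" where
  "young_function \<Phi> \<longleftrightarrow> \<Phi> 0 = 0 \<and> convex_on {0..} \<Phi> \<and> mono_on {0..} \<Phi>
     \<and> continuous_on {0..} \<Phi> \<and> filterlim \<Phi> at_top at_top"

definition orlicz_modular :: "(real \<Rightarrow> real) \<Rightarrow> (real \<Rightarrow> complex) \<Rightarrow> ennreal" where
  "orlicz_modular \<Phi> g = (\<integral>\<^sup>+ x\<in>torus. ennreal (\<Phi> (norm (g x))) \<partial>lborel)"

definition orlicz_space :: "(real \<Rightarrow> real) \<Rightarrow> (real \<Rightarrow> complex) set" where
  "orlicz_space \<Phi> = {g. g \<in> borel_measurable lborel \<and>
      (\<exists>l>0. orlicz_modular \<Phi> (\<lambda>x. g x / of_real l) \<le> 1)}"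

definition luxemburg_norm :: "(real \<Rightarrow> real) \<Rightarrow> (real \<Rightarrow> complex) \<Rightarrow> real" where
  "luxemburg_norm \<Phi> g = Inf {l. l > 0 \<and> orlicz_modular \<Phi> (\<lambda>x. g x / of_real l) \<le> 1}"

end

theory Submission
  imports Defs
begin

text \<open>Normalise g so that its Orlicz modular is at most 1 and cut it at a height l with
  Phi(l) >= N. By convexity the part above l has L^1 norm at most l / Phi(l), so each of its
  Fourier coefficients is small; since Phi has upper type 2, the part below l has squared
  L^2 norm at most K l^2 / Phi(l), and Bessel's inequality applies to it. Together,
  ||S_A g||_2^2 <~ l^2 / N. Upper type 2 also gives Phi(t) <~ 1 + t^2, so this L^2 bound
  controls the modular of S_A g, whence ||S_A g||_Phi <~ l / sqrt N. For
  Phi(t) ~ t^p (log t)^(alpha p) one can take l ~ N^(1/p) (log N)^(-alpha).\<close>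

section \<open>Growth of the Orlicz function\<close>

definition llog_density :: "real \<Rightarrow> real \<Rightarrow> real \<Rightarrow> real \<Rightarrow> real" where
  "llog_density p \<alpha> c s = s powr (p - 1) * ln (c + s) powr (\<alpha> * p)"

lemma PhiLlog_eq_integral: "PhiLlog p \<alpha> c t = integral {0..t} (llog_density p \<alpha> c)"
  unfolding PhiLlog_def llog_density_def by (rule refl)

lemma llog_density_nonneg: "llog_density p \<alpha> c s \<ge> 0"
  unfolding llog_density_def by simp

lemma continuous_on_llog_density:
  assumes "p > 1" "c > 1"
  shows "continuous_on {0..} (llog_density p \<alpha> c)"
  unfolding llog_density_def
proof (rule continuous_on_mult)
  show "continuous_on {0..} (\<lambda>x::real. x powr (p - 1))"
    by (rule continuous_on_powr') (use assms in \<open>auto intro!: continuous_intros\<close>)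
  show "continuous_on {0..} (\<lambda>x::real. ln (c + x) powr (\<alpha> * p))"
    by (rule continuous_on_powr) (use assms in \<open>auto intro!: continuous_intros\<close>)
qed

lemma integrable_llog_density:
  assumes "p > 1" "c > 1" "0 \<le> a"
  shows "llog_density p \<alpha> c integrable_on {a..b}"
  by (rule integrable_continuous_interval,
      rule continuous_on_subset[OF continuous_on_llog_density[OF assms(1,2)]])
     (use assms in auto)

lemma PhiLlog_nonneg: "p > 1 \<Longrightarrow> c > 1 \<Longrightarrow> PhiLlog p \<alpha> c t \<ge> 0"
  unfolding PhiLlog_eq_integral
  by (cases "0 \<le> t") (auto intro!: integral_nonneg integrable_llog_density llog_density_nonneg)

lemma PhiLlog_mult_eq:
  assumes "p > 1" "c > 1" "r > 0" "t \<ge> 0"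
  shows "PhiLlog p \<alpha> c (r * t) = r * integral {0..t} (\<lambda>u. llog_density p \<alpha> c (r * u))"
proof -
  have "(llog_density p \<alpha> c has_integral PhiLlog p \<alpha> c (r * t)) {0..r * t}"
    unfolding PhiLlog_eq_integral using integrable_llog_density[OF assms(1,2), of 0]
    by (simp add: has_integral_integral)
  from has_integral_stretch_real[OF this, of r]
  have "((\<lambda>u. llog_density p \<alpha> c (r * u)) has_integral (1 / r) * PhiLlog p \<alpha> c (r * t))
          ((\<lambda>x. x / r) ` {0..r * t})"
    using assms by simp
  moreover have "(\<lambda>x. x / r) ` {0..r * t} = {0..t}"
  proof
    show "(\<lambda>x. x / r) ` {0..r * t} \<subseteq> {0..t}" using assms by (auto simp: field_simps)
    show "{0..t} \<subseteq> (\<lambda>x. x / r) ` {0..r * t}"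
    proof
      fix x assume "x \<in> {0..t}"
      then have "r * x \<in> {0..r * t}" "x = (r * x) / r" using assms by auto
      then show "x \<in> (\<lambda>x. x / r) ` {0..r * t}" by blast
    qed
  qed
  ultimately have "integral {0..t} (\<lambda>u. llog_density p \<alpha> c (r * u)) = (1 / r) * PhiLlog p \<alpha> c (r * t)"
    by (metis integral_unique)
  then show ?thesis using assms by simp
qed

lemma ln_add_mult_le:
  fixes c r u :: real
  assumes "c > 1" "r \<ge> 1" "u \<ge> 0"
  shows "ln (c + r * u) \<le> (1 + ln r / ln c) * ln (c + u)"
proof -
  have "c + r * u \<le> r * (c + u)"
    using assms mult_right_mono[of 1 r c] by (simp add: algebra_simps)
  then have "ln (c + r * u) \<le> ln (r * (c + u))"
    using assms by (intro ln_mono) (auto intro: add_pos_nonneg)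
  also have "\<dots> = ln r + ln (c + u)" using assms by (simp add: ln_mult)
  also have "ln r \<le> ln r / ln c * ln (c + u)"
  proof -
    have "ln r * ln c \<le> ln r * ln (c + u)" using assms by (intro mult_left_mono) auto
    then show ?thesis using assms by (simp add: field_simps)
  qed
  finally show ?thesis by (simp add: algebra_simps)
qed

lemma llog_density_mult_le:
  assumes "p > 1" "c > 1" "r \<ge> 1" "u \<ge> 0"
  shows "llog_density p \<alpha> c (r * u)
           \<le> r powr (p - 1) * (1 + ln r / ln c) powr (max \<alpha> 0 * p) * llog_density p \<alpha> c u"
proof -
  define X where "X = 1 + ln r / ln c"
  have X1: "X \<ge> 1" using assms unfolding X_def by simp
  have "r * u \<ge> 0" using assms by simp
  then have "1 < c + r * u" using assms by linarith
  then have ln_pos: "ln (c + u) > 0" "ln (c + r * u) > 0" using assms by (auto intro!: ln_gt_zero)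
  have "ln (c + r * u) powr (\<alpha> * p) \<le> X powr (max \<alpha> 0 * p) * ln (c + u) powr (\<alpha> * p)"
  proof (cases "\<alpha> \<le> 0")
    case True
    have "ln (c + u) \<le> ln (c + r * u)"
      using assms mult_right_mono[of 1 r u] by (intro ln_mono) auto
    then have "ln (c + r * u) powr (\<alpha> * p) \<le> ln (c + u) powr (\<alpha> * p)"
      using True assms ln_pos by (intro powr_mono2') (auto simp: mult_nonpos_nonneg)
    then show ?thesis using True X1 by simp
  next
    case False
    have "ln (c + r * u) powr (\<alpha> * p) \<le> (X * ln (c + u)) powr (\<alpha> * p)"
      using False assms ln_pos ln_add_mult_le[OF assms(2-4)] unfolding X_def
      by (intro powr_mono2) auto
    also have "\<dots> = X powr (\<alpha> * p) * ln (c + u) powr (\<alpha> * p)"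
      using X1 ln_pos by (simp add: powr_mult)
    finally show ?thesis using False by simp
  qed
  then have "r powr (p - 1) * u powr (p - 1) * ln (c + r * u) powr (\<alpha> * p)
      \<le> r powr (p - 1) * u powr (p - 1) * (X powr (max \<alpha> 0 * p) * ln (c + u) powr (\<alpha> * p))"
    by (intro mult_left_mono) auto
  then show ?thesis
    unfolding llog_density_def X_def using assms by (simp add: powr_mult ac_simps)
qed

lemma PhiLlog_mult_le:
  assumes "p > 1" "c > 1" "r \<ge> 1" "t \<ge> 0"
  shows "PhiLlog p \<alpha> c (r * t) \<le> r powr p * (1 + ln r / ln c) powr (max \<alpha> 0 * p) * PhiLlog p \<alpha> c t"
proof -
  define G where "G = r powr (p - 1) * (1 + ln r / ln c) powr (max \<alpha> 0 * p)"
  have "PhiLlog p \<alpha> c (r * t) = r * integral {0..t} (\<lambda>u. llog_density p \<alpha> c (r * u))"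
    using assms by (intro PhiLlog_mult_eq) auto
  also have "integral {0..t} (\<lambda>u. llog_density p \<alpha> c (r * u))
               \<le> integral {0..t} (\<lambda>u. G * llog_density p \<alpha> c u)"
  proof (rule integral_le)
    show "(\<lambda>u. llog_density p \<alpha> c (r * u)) integrable_on {0..t}"
      using assms
      by (intro integrable_continuous_interval
          continuous_on_compose2[OF continuous_on_llog_density[OF assms(1,2)]] continuous_intros) auto
    show "(\<lambda>u. G * llog_density p \<alpha> c u) integrable_on {0..t}"
      by (intro integrable_on_mult_right integrable_llog_density) (use assms in auto)
    show "\<And>u. u \<in> {0..t} \<Longrightarrow> llog_density p \<alpha> c (r * u) \<le> G * llog_density p \<alpha> c u"
      unfolding G_def using assms by (intro llog_density_mult_le) auto
  qed
  also have "integral {0..t} (\<lambda>u. G * llog_density p \<alpha> c u) = G * PhiLlog p \<alpha> c t"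
    by (simp add: PhiLlog_eq_integral)
  finally have "PhiLlog p \<alpha> c (r * t) \<le> r * (G * PhiLlog p \<alpha> c t)"
    using assms by (simp add: mult_left_mono)
  also have "\<dots> = r powr p * (1 + ln r / ln c) powr (max \<alpha> 0 * p) * PhiLlog p \<alpha> c t"
    unfolding G_def using assms by (simp add: powr_diff field_simps)
  finally show ?thesis .
qed

lemma one_plus_ln_div_powr_le:
  fixes a b \<epsilon> x :: real
  assumes "a \<ge> 0" "b > 0" "\<epsilon> > 0" "x \<ge> 1"
  shows "(1 + ln x / b) powr a \<le> (1 + a / (\<epsilon> * b)) powr a * x powr \<epsilon>"
proof (cases "a = 0")
  case True
  have "1 + ln x / b > 0" using assms by (simp add: add_pos_nonneg)
  moreover have "x powr \<epsilon> \<ge> 1" using assms by (simp add: ge_one_powr_ge_zero)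
  ultimately show ?thesis using True by simp
next
  case False
  then have a: "a > 0" using assms by simp
  have y1: "x powr (\<epsilon> / a) \<ge> 1" using assms a by (simp add: ge_one_powr_ge_zero)
  have "ln x = (a / \<epsilon>) * ln (x powr (\<epsilon> / a))" using assms a by (simp add: ln_powr)
  also have "\<dots> \<le> (a / \<epsilon>) * x powr (\<epsilon> / a)"
    using y1 assms a ln_le_minus_one[of "x powr (\<epsilon> / a)"] by (intro mult_left_mono) auto
  finally have "1 + ln x / b \<le> 1 + (a / (\<epsilon> * b)) * x powr (\<epsilon> / a)"
    using assms by (simp add: field_simps divide_right_mono)
  also have "\<dots> \<le> (1 + a / (\<epsilon> * b)) * x powr (\<epsilon> / a)" using y1 by (simp add: algebra_simps)
  finally have "(1 + ln x / b) powr a \<le> ((1 + a / (\<epsilon> * b)) * x powr (\<epsilon> / a)) powr a"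
    using assms a by (intro powr_mono2) auto
  also have "\<dots> = (1 + a / (\<epsilon> * b)) powr a * x powr \<epsilon>"
    using assms a by (simp add: powr_mult powr_powr)
  finally show ?thesis .
qed

lemma PhiLlog_upper_type_2:
  assumes hp: "(1 < p \<and> p < 2) \<or> (p = 2 \<and> \<alpha> \<le> 0)" and hc: "c > 1"
  shows "\<exists>K>0. \<forall>r\<ge>1. \<forall>t\<ge>0. PhiLlog p \<alpha> c (r * t) \<le> K * r^2 * PhiLlog p \<alpha> c t"
proof -
  have p1: "p > 1" using hp by auto
  define K where "K = (if \<alpha> \<le> 0 then 1 else (1 + (\<alpha> * p) / ((2 - p) * ln c)) powr (\<alpha> * p))"
  have K_pos: "K > 0"
  proof (cases "\<alpha> \<le> 0")
    case False
    then have "0 \<le> \<alpha> * p / ((2 - p) * ln c)" using hp hc by (intro divide_nonneg_pos) auto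
    then show ?thesis using False unfolding K_def by simp
  qed (simp add: K_def)
  \<comment> \<open>for \<open>\<alpha> > 0\<close> the logarithmic factor is absorbed by the gap \<open>r powr (2 - p)\<close>\<close>
  have log_factor: "(1 + ln r / ln c) powr (max \<alpha> 0 * p) \<le> K * r powr (2 - p)" if r: "r \<ge> 1" for r
  proof (cases "\<alpha> \<le> 0")
    case True
    have "1 + ln r / ln c > 0" using r hc by (simp add: add_pos_nonneg)
    moreover have "r powr (2 - p) \<ge> 1" using r hp by (intro ge_one_powr_ge_zero) auto
    ultimately show ?thesis using True unfolding K_def by simp
  next
    case False
    then have "(1 + ln r / ln c) powr (\<alpha> * p)
                 \<le> (1 + (\<alpha> * p) / ((2 - p) * ln c)) powr (\<alpha> * p) * r powr (2 - p)"
      using hp hc r by (intro one_plus_ln_div_powr_le) auto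
    then show ?thesis using False unfolding K_def by simp
  qed
  have "PhiLlog p \<alpha> c (r * t) \<le> K * r^2 * PhiLlog p \<alpha> c t" if "r \<ge> 1" "t \<ge> 0" for r t
  proof -
    have "PhiLlog p \<alpha> c (r * t) \<le> r powr p * (1 + ln r / ln c) powr (max \<alpha> 0 * p) * PhiLlog p \<alpha> c t"
      using that p1 hc by (intro PhiLlog_mult_le) auto
    also have "\<dots> \<le> r powr p * (K * r powr (2 - p)) * PhiLlog p \<alpha> c t"
      using log_factor[OF that(1)] PhiLlog_nonneg[OF p1 hc] by (intro mult_right_mono mult_left_mono) auto
    also have "r powr p * (K * r powr (2 - p)) = K * r^2"
      using that by (simp add: powr_add[symmetric] algebra_simps)
    finally show ?thesis .
  qed
  then show ?thesis using K_pos by blast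
qed

lemma PhiLlog_ge_half_power:
  assumes "p > 1" "c > 1" "r > 0" "m \<ge> 0"
    and m: "\<And>s. s \<in> {r/2..r} \<Longrightarrow> m \<le> ln (c + s) powr (\<alpha> * p)"
  shows "(r/2) powr p * m \<le> PhiLlog p \<alpha> c r"
proof -
  have "(r/2) powr (p - 1) * m \<le> llog_density p \<alpha> c s" if s: "s \<in> {r/2..r}" for s
    unfolding llog_density_def using assms s m[OF s] by (intro mult_mono powr_mono2) auto
  then have "integral {r/2..r} (\<lambda>s. (r/2) powr (p - 1) * m) \<le> integral {r/2..r} (llog_density p \<alpha> c)"
    using assms by (intro integral_le integrable_llog_density) auto
  also have "\<dots> \<le> integral {0..r} (llog_density p \<alpha> c)"
    using assms by (intro integral_subset_le integrable_llog_density llog_density_nonneg ballI) auto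
  also have "integral {r/2..r} (\<lambda>s. (r/2) powr (p - 1) * m) = (r/2) powr p * m"
    using assms by (simp add: powr_diff field_simps)
  finally show ?thesis unfolding PhiLlog_eq_integral .
qed

lemma le_PhiLlog_of_log_bound:
  assumes "p > 1" "c > 1" "r > 0" "X > 0" "N \<ge> 0"
    and "N powr (1/p) \<le> r/2 * X powr \<alpha>"
    and X: "\<And>s. s \<in> {r/2..r} \<Longrightarrow> X powr (\<alpha> * p) \<le> ln (c + s) powr (\<alpha> * p)"
  shows "N \<le> PhiLlog p \<alpha> c r"
proof -
  have "N = (N powr (1/p)) powr p" using assms by (simp add: powr_powr)
  also have "\<dots> \<le> (r/2 * X powr \<alpha>) powr p" using assms by (intro powr_mono2) auto
  also have "\<dots> = (r/2) powr p * X powr (\<alpha> * p)"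
    by (subst powr_mult) (use assms in \<open>auto simp: powr_powr\<close>)
  also have "\<dots> \<le> PhiLlog p \<alpha> c r" by (rule PhiLlog_ge_half_power[OF assms(1-3) _ X]) auto
  finally show ?thesis .
qed

lemma ln_exp1_add_bounds:
  fixes N :: real
  assumes "N \<ge> 1"
  shows "1 \<le> ln (exp 1 + N)" "ln N \<le> ln (exp 1 + N)" "ln (exp 1 + N) \<le> 2 + ln N"
proof -
  have "exp 1 \<le> exp 1 + N" "N \<le> exp 1 + N" using assms by auto
  then show "1 \<le> ln (exp 1 + N)" "ln N \<le> ln (exp 1 + N)"
    using assms by (metis ln_exp ln_mono exp_gt_zero, intro ln_mono) auto
  have "exp 1 \<le> exp 1 * N" "N \<le> exp 1 * N"
    using assms mult_left_mono[of 1 N "exp 1"] mult_right_mono[of 1 "exp 1" N] by auto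
  then have "exp 1 + N \<le> 2 * exp 1 * N" by (subst mult.assoc) linarith
  moreover have "0 < exp 1 + N" using assms exp_gt_zero[of 1] by linarith
  ultimately have "ln (exp 1 + N) \<le> ln (2 * exp 1 * N)" by (intro ln_mono)
  also have "\<dots> = ln 2 + 1 + ln N" using assms by (simp add: ln_mult)
  finally show "ln (exp 1 + N) \<le> 2 + ln N" using ln_2_less_1 by simp
qed

lemma ln_exp1_add_powr_le_powr:
  fixes a \<beta> :: real
  assumes "a \<ge> 0" "\<beta> > 0"
  shows "\<exists>M>0. \<forall>N\<ge>1. ln (exp 1 + N) powr a \<le> M * N powr \<beta>"
proof -
  define M where "M = 2 powr a * (1 + a / (\<beta> * 2)) powr a"
  have "ln (exp 1 + N) powr a \<le> M * N powr \<beta>" if N: "N \<ge> 1" for N :: real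
  proof -
    have "ln (exp 1 + N) powr a \<le> (2 * (1 + ln N / 2)) powr a"
      using ln_exp1_add_bounds[OF N] assms by (intro powr_mono2) auto
    also have "\<dots> = 2 powr a * (1 + ln N / 2) powr a" by (rule powr_mult)
    also have "\<dots> \<le> 2 powr a * ((1 + a / (\<beta> * 2)) powr a * N powr \<beta>)"
      using assms N by (intro mult_left_mono one_plus_ln_div_powr_le) auto
    finally show ?thesis unfolding M_def by (simp add: mult.assoc)
  qed
  moreover have "1 + a / (\<beta> * 2) > 0" using assms by (simp add: add_pos_nonneg)
  then have "M > 0" unfolding M_def by simp
  ultimately show ?thesis by blast
qed

lemma mult_ln_exp1_add_le_ln_add_powr:
  fixes c \<beta> :: real
  assumes "c > 1" "\<beta> > 0"
  shows "\<exists>k>0. \<forall>N\<ge>1. k * ln (exp 1 + N) \<le> ln (c + N powr \<beta>)"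
proof -
  define k where "k = min (ln c / 4) (\<beta> / 2)"
  have "k * ln (exp 1 + N) \<le> ln (c + N powr \<beta>)" if N: "N \<ge> 1" for N :: real
  proof -
    have "k * ln (exp 1 + N) \<le> k * (2 + ln N)"
      using ln_exp1_add_bounds[OF N] assms by (intro mult_left_mono) (auto simp: k_def)
    also have "\<dots> \<le> ln c / 2 + (\<beta> / 2) * ln N"
    proof -
      have "k \<le> ln c / 4" "k \<le> \<beta> / 2" unfolding k_def by auto
      then show ?thesis using N mult_right_mono[of k "\<beta>/2" "ln N"] by (simp add: algebra_simps)
    qed
    also have "\<dots> \<le> ln (c + N powr \<beta>)"
    proof -
      have "ln c \<le> ln (c + N powr \<beta>)" using assms by (intro ln_mono) auto
      moreover have "\<beta> * ln N = ln (N powr \<beta>)" using N by (simp add: ln_powr)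
      moreover have "ln (N powr \<beta>) \<le> ln (c + N powr \<beta>)" using assms N by (intro ln_mono) auto
      ultimately show ?thesis by linarith
    qed
    finally show ?thesis .
  qed
  moreover have "k > 0" unfolding k_def using assms by simp
  ultimately show ?thesis by blast
qed

lemma PhiLlog_inverse_bound_pos:
  assumes p: "p > 1" and c: "c > 1" and \<alpha>: "\<alpha> > 0"
  shows "\<exists>K>0. \<forall>N\<ge>1. N \<le> PhiLlog p \<alpha> c (K * N powr (1/p) * ln (exp 1 + N) powr (- \<alpha>))"
proof -
  define \<beta> where "\<beta> = 1 / (2 * p)"
  have \<beta>: "\<beta> > 0" "1/p = \<beta> + \<beta>" unfolding \<beta>_def using p by auto
  obtain M where M: "M > 0" "\<And>N. N \<ge> 1 \<Longrightarrow> ln (exp 1 + N) powr \<alpha> \<le> M * N powr \<beta>"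
    using ln_exp1_add_powr_le_powr[of \<alpha> \<beta>] \<alpha> \<beta> by auto
  obtain k where k: "k > 0" "\<And>N. N \<ge> 1 \<Longrightarrow> k * ln (exp 1 + N) \<le> ln (c + N powr \<beta>)"
    using mult_ln_exp1_add_le_ln_add_powr[OF c \<beta>(1)] by auto
  \<comment> \<open>\<open>K \<ge> 2 M\<close> forces \<open>r / 2 \<ge> N powr \<beta>\<close>, so \<open>ln (c + s) \<ge> k L\<close> on \<open>[r / 2, r]\<close>\<close>
  define K where "K = max (2 * M) (2 * k powr (- \<alpha>))"
  have K_pos: "K > 0" unfolding K_def using M by simp
  have "N \<le> PhiLlog p \<alpha> c (K * N powr (1/p) * ln (exp 1 + N) powr (- \<alpha>))" if N: "N \<ge> 1" for N
  proof -
    define L where "L = ln (exp 1 + N)"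
    define r where "r = K * N powr (1/p) * L powr (- \<alpha>)"
    have L: "L \<ge> 1" "L powr \<alpha> > 0" using ln_exp1_add_bounds(1)[OF N] unfolding L_def by auto
    have r_pos: "r > 0" unfolding r_def using K_pos N L by simp
    have r_half: "r / 2 = (K / 2) * N powr (1/p) / L powr \<alpha>"
      unfolding r_def by (simp add: powr_minus_divide)
    have "N powr (1/p) = N powr \<beta> * N powr \<beta>" unfolding \<beta>(2) by (rule powr_add)
    then have "N powr \<beta> = M * N powr (1/p) / (M * N powr \<beta>)" using M N by simp
    also have "\<dots> \<le> M * N powr (1/p) / L powr \<alpha>"
      using M(1) M(2)[OF N] N L unfolding L_def by (intro divide_left_mono) auto
    also have "\<dots> \<le> r / 2"
      unfolding r_half K_def using L by (intro divide_right_mono mult_right_mono) auto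
    finally have N_r: "N powr \<beta> \<le> r / 2" .
    have X: "(k * L) powr (\<alpha> * p) \<le> ln (c + s) powr (\<alpha> * p)" if s: "s \<in> {r/2..r}" for s
    proof -
      have "k * L \<le> ln (c + N powr \<beta>)" using k(2)[OF N] unfolding L_def .
      also have "\<dots> \<le> ln (c + s)" using s N_r c by (intro ln_mono) (auto intro: add_pos_nonneg)
      finally show ?thesis using k L \<alpha> p by (intro powr_mono2) auto
    qed
    have "1 \<le> (K / 2) * k powr \<alpha>"
    proof -
      have "1 = k powr (- \<alpha>) * k powr \<alpha>" using k by (simp add: powr_add[symmetric])
      also have "\<dots> \<le> (K / 2) * k powr \<alpha>" unfolding K_def by (intro mult_right_mono) auto
      finally show ?thesis .
    qed
    then have "N powr (1/p) \<le> (K / 2) * k powr \<alpha> * N powr (1/p)"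
      using mult_right_mono[of 1 "(K / 2) * k powr \<alpha>" "N powr (1/p)"] by simp
    also have "\<dots> = r / 2 * (k * L) powr \<alpha>"
      unfolding r_half using k L by (simp add: powr_mult)
    finally have "N powr (1/p) \<le> r / 2 * (k * L) powr \<alpha>" .
    then show ?thesis
      unfolding r_def[symmetric] L_def[symmetric] using p c r_pos k L N X
      by (intro le_PhiLlog_of_log_bound) auto
  qed
  then show ?thesis using K_pos by blast
qed

lemma exists_powr_ln_add_le_half:
  fixes a c :: real
  assumes a: "a \<ge> 0" and c: "c > 1"
  shows "\<exists>K\<ge>c. (ln (c + K) + 1 + a) powr a \<le> K / 2"
proof -
  define D where "D = 2 * (2 + a) powr a * (1 + 2 * a) powr a"
  define K where "K = max c (D^2)"
  have K: "K \<ge> c" "K \<ge> D^2" "K > 0" unfolding K_def using c by auto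
  have "ln (c + K) \<le> ln (2 * K)" using K c by (intro ln_mono) auto
  then have "ln (c + K) + 1 + a \<le> ln 2 + ln K + 1 + a" using K by (simp add: ln_mult)
  also have "\<dots> \<le> (2 + a) * (1 + ln K / 1)"
  proof -
    have "0 \<le> ln K" using K c by simp
    then have "ln K \<le> (2 + a) * ln K" using a mult_right_mono[of 1 "2 + a" "ln K"] by simp
    then show ?thesis using ln_2_less_1 a by (simp add: algebra_simps)
  qed
  finally have "(ln (c + K) + 1 + a) powr a \<le> ((2 + a) * (1 + ln K / 1)) powr a"
    using K c a by (intro powr_mono2) (auto intro: add_nonneg_nonneg)
  also have "\<dots> = (2 + a) powr a * (1 + ln K / 1) powr a" by (rule powr_mult)
  also have "\<dots> \<le> (2 + a) powr a * ((1 + a / ((1/2) * 1)) powr a * K powr (1/2))"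
    using a K c by (intro mult_left_mono one_plus_ln_div_powr_le) auto
  also have "\<dots> = D / 2 * sqrt K" unfolding D_def using K by (simp add: powr_half_sqrt mult.commute)
  also have "\<dots> \<le> sqrt K / 2 * sqrt K"
  proof -
    have "D = sqrt (D^2)" unfolding D_def using a by simp
    also have "\<dots> \<le> sqrt K" using K(2) real_sqrt_le_mono by blast
    finally show ?thesis using K by (intro mult_right_mono) auto
  qed
  also have "\<dots> = K / 2" using K by simp
  finally show ?thesis using K by blast
qed

lemma ln_add_le_mult_ln_exp1_add:
  fixes c K a p N :: real
  assumes c: "c > 1" and "K > 0" "a \<ge> 0" "p \<ge> 1" "N \<ge> 1"
  shows "ln (c + K * N powr (1/p) * ln (exp 1 + N) powr a) \<le> (ln (c + K) + 1 + a) * ln (exp 1 + N)"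
proof -
  define L where "L = ln (exp 1 + N)"
  define r where "r = K * N powr (1/p) * L powr a"
  have L: "L \<ge> 1" "ln N \<le> L" using ln_exp1_add_bounds[OF assms(5)] unfolding L_def by auto
  have La: "L powr a \<ge> 1" using L assms by (simp add: ge_one_powr_ge_zero)
  have "N powr (1/p) \<le> N" using assms powr_mono[of "1/p" 1 N] by simp
  then have "r \<le> K * (N * L powr a)" unfolding r_def using assms La by (simp add: mult_right_mono)
  moreover have "1 \<le> N * L powr a" using assms La by (metis mult_mono' mult_1 zero_le_one)
  then have "c \<le> c * (N * L powr a)" using c mult_left_mono[of 1 "N * L powr a" c] by simp
  ultimately have "c + r \<le> (c + K) * (N * L powr a)" by (simp add: distrib_right)
  moreover have "r > 0" unfolding r_def using assms L by simp
  ultimately have "ln (c + r) \<le> ln ((c + K) * (N * L powr a))"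
    using c by (intro ln_mono) auto
  also have "\<dots> = ln (c + K) + ln N + a * ln L"
    using assms L by (simp add: ln_mult ln_powr)
  also have "\<dots> \<le> (ln (c + K) + 1 + a) * L"
  proof -
    have "ln (c + K) \<le> ln (c + K) * L" "a * ln L \<le> a * L"
      using assms L ln_le_minus_one[of L] by (auto simp: mult_le_cancel_left1 mult_left_mono)
    then show ?thesis using L by (simp add: algebra_simps)
  qed
  finally show ?thesis unfolding r_def L_def .
qed

lemma PhiLlog_inverse_bound_nonpos:
  assumes p: "p > 1" and c: "c > 1" and \<alpha>: "\<alpha> \<le> 0"
  shows "\<exists>K>0. \<forall>N\<ge>1. N \<le> PhiLlog p \<alpha> c (K * N powr (1/p) * ln (exp 1 + N) powr (- \<alpha>))"
proof -
  define a where "a = - \<alpha>"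
  have a: "a \<ge> 0" unfolding a_def using \<alpha> by simp
  \<comment> \<open>\<open>ln (c + r) \<le> B L\<close> where \<open>B\<close> grows only logarithmically in \<open>K\<close>, so \<open>K\<close> can absorb \<open>B powr a\<close>\<close>
  obtain K where K: "K \<ge> c" and B_le: "(ln (c + K) + 1 + a) powr a \<le> K / 2"
    using exists_powr_ln_add_le_half[OF a c] by auto
  define B where "B = ln (c + K) + 1 + a"
  have K_pos: "K > 0" and ln_cK: "ln (c + K) \<ge> 0" using K c by auto
  then have B: "B \<ge> 1" unfolding B_def using a by simp
  have "N \<le> PhiLlog p \<alpha> c (K * N powr (1/p) * ln (exp 1 + N) powr a)" if N: "N \<ge> 1" for N
  proof -
    define L where "L = ln (exp 1 + N)"
    define r where "r = K * N powr (1/p) * L powr a"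
    have L: "L \<ge> 1" using ln_exp1_add_bounds[OF N] unfolding L_def by auto
    have r_pos: "r > 0" unfolding r_def using K_pos N L by simp
    have ln_r: "ln (c + r) \<le> B * L"
      unfolding r_def L_def B_def using c K_pos a p N by (intro ln_add_le_mult_ln_exp1_add) auto
    have X: "(B * L) powr (\<alpha> * p) \<le> ln (c + s) powr (\<alpha> * p)" if s: "s \<in> {r/2..r}" for s
    proof -
      have "ln (c + s) \<le> ln (c + r)" using s r_pos c by (intro ln_mono) auto
      moreover have "0 < ln (c + s)" using s r_pos c by (intro ln_gt_zero) auto
      ultimately show ?thesis
        using ln_r \<alpha> p by (intro powr_mono2') (auto simp: mult_nonpos_nonneg)
    qed
    have "1 \<le> (K / 2) * B powr \<alpha>"
    proof -
      have "1 = B powr a * B powr \<alpha>" using B unfolding a_def by (simp add: powr_add[symmetric])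
      also have "\<dots> \<le> (K / 2) * B powr \<alpha>" using B_le unfolding B_def by (intro mult_right_mono) auto
      finally show ?thesis .
    qed
    then have "N powr (1/p) \<le> (K / 2) * B powr \<alpha> * N powr (1/p)"
      using mult_right_mono[of 1 "(K / 2) * B powr \<alpha>" "N powr (1/p)"] by simp
    also have "\<dots> = r / 2 * (B * L) powr \<alpha>"
    proof -
      have "L powr a * L powr \<alpha> = 1" using L unfolding a_def by (simp add: powr_add[symmetric])
      then show ?thesis unfolding r_def using B L by (simp add: powr_mult field_simps)
    qed
    finally have "N powr (1/p) \<le> r / 2 * (B * L) powr \<alpha>" .
    then show ?thesis
      unfolding r_def[symmetric] L_def[symmetric] using p c r_pos B L N X
      by (intro le_PhiLlog_of_log_bound) auto
  qed
  then show ?thesis using K_pos unfolding a_def by blast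
qed

lemma PhiLlog_inverse_bound:
  assumes "(1 < p \<and> p < 2) \<or> (p = 2 \<and> \<alpha> \<le> 0)" and "c > 1"
  shows "\<exists>K>0. \<forall>N\<ge>1. N \<le> PhiLlog p \<alpha> c (K * N powr (1/p) * ln (exp 1 + N) powr (- \<alpha>))"
  using assms PhiLlog_inverse_bound_pos[of p c \<alpha>] PhiLlog_inverse_bound_nonpos[of p c \<alpha>]
  by (cases "\<alpha> > 0") auto

section \<open>Fourier series on the torus\<close>

abbreviation torus_measure :: "real measure" where
  "torus_measure \<equiv> restrict_space lborel torus"

definition fourier_char :: "int \<Rightarrow> real \<Rightarrow> complex" where
  "fourier_char n x = exp (\<i> * of_int n * of_real x)"

lemma space_torus_measure [simp]: "space torus_measure = torus"
  by (simp add: space_restrict_space)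

lemma emeasure_torus_measure: "emeasure torus_measure torus = ennreal (2 * pi)"
  by (simp add: emeasure_restrict_space torus_def)

lemma measure_torus_measure: "measure torus_measure torus = 2 * pi"
  using emeasure_torus_measure by (simp add: measure_def)

lemma finite_measure_torus_measure: "finite_measure torus_measure"
  by (rule finite_measureI) (simp add: emeasure_torus_measure)

lemma set_integral_torus_eq:
  fixes f :: "real \<Rightarrow> 'b::{banach, second_countable_topology}"
  shows "set_lebesgue_integral lborel torus f = integral\<^sup>L torus_measure f"
  unfolding set_lebesgue_integral_def
  by (rule integral_restrict_space[symmetric]) (simp add: torus_def)

lemma orlicz_modular_eq_nn_integral:
  "orlicz_modular \<Phi> g = (\<integral>\<^sup>+x. ennreal (\<Phi> (norm (g x))) \<partial>torus_measure)"
  unfolding orlicz_modular_def by (rule nn_integral_restrict_space[symmetric]) (simp add: torus_def)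

lemma integrable_torus_measure_bounded:
  fixes f :: "real \<Rightarrow> 'b::{banach, second_countable_topology}"
  assumes "f \<in> borel_measurable torus_measure" "\<And>x. x \<in> torus \<Longrightarrow> norm (f x) \<le> B"
  shows "integrable torus_measure f"
  by (rule finite_measure.integrable_const_bound[OF finite_measure_torus_measure, of f B])
     (use assms in \<open>auto simp: AE_restrict_space_iff\<close>)

lemma borel_measurable_cnj [measurable]:
  "f \<in> borel_measurable M \<Longrightarrow> (\<lambda>x. cnj (f x :: complex)) \<in> borel_measurable M"
  by (rule borel_measurable_continuous_on[where f=cnj]) (auto intro: continuous_on_cnj continuous_on_id)

lemma borel_measurable_fourier_char [measurable]: "fourier_char n \<in> borel_measurable torus_measure"
  unfolding fourier_char_def by (intro measurable_restrict_space1) measurable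

lemma norm_fourier_char [simp]: "norm (fourier_char n x) = 1"
  unfolding fourier_char_def by (simp add: norm_exp_eq_Re)

lemma cnj_fourier_char: "cnj (fourier_char n x) = fourier_char (- n) x"
  unfolding fourier_char_def by (simp add: exp_cnj)

lemma fourier_char_mult_cnj: "fourier_char n x * cnj (fourier_char m x) = fourier_char (n - m) x"
  unfolding cnj_fourier_char unfolding fourier_char_def by (simp add: exp_add[symmetric] algebra_simps)

lemma fourier_coeff_eq_integral:
  "fourier_coeff g n = of_real (1 / (2 * pi)) * integral\<^sup>L torus_measure (\<lambda>x. g x * cnj (fourier_char n x))"
  unfolding fourier_coeff_def set_integral_torus_eq cnj_fourier_char unfolding fourier_char_def by simp

lemma partial_sum_eq: "partial_sum A g x = (\<Sum>n\<in>A. fourier_coeff g n * fourier_char n x)"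
  unfolding partial_sum_def fourier_char_def by simp

lemma borel_measurable_partial_sum [measurable]: "partial_sum A g \<in> borel_measurable torus_measure"
  unfolding partial_sum_eq by measurable

lemma norm_partial_sum_le: "norm (partial_sum A g x) \<le> (\<Sum>n\<in>A. norm (fourier_coeff g n))"
  unfolding partial_sum_eq by (rule order_trans[OF norm_sum]) (simp add: norm_mult)

lemma integrable_norm_partial_sum_square:
  "integrable torus_measure (\<lambda>x. (norm (partial_sum A g x))^2)"
  by (rule integrable_torus_measure_bounded[where B="(\<Sum>n\<in>A. norm (fourier_coeff g n))^2"])
     (auto simp: norm_partial_sum_le power_mono)

lemma integral_fourier_char: "integral\<^sup>L torus_measure (fourier_char k) = (if k = 0 then 2 * pi else 0)"
proof (cases "k = 0")
  case True
  then have "integral\<^sup>L torus_measure (fourier_char k) = integral\<^sup>L torus_measure (\<lambda>x. 1::complex)"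
    unfolding fourier_char_def by simp
  also have "\<dots> = 2 * pi" using measure_torus_measure by (simp add: scaleR_conv_of_real)
  finally show ?thesis using True by simp
next
  case False
  define F where "F z = exp (\<i> * of_int k * z) / (\<i> * of_int k)" for z :: complex
  have der: "(F has_field_derivative exp (\<i> * of_int k * z)) (at z)" for z
    unfolding F_def using False by (auto intro!: derivative_eq_intros)
  have "integral\<^sup>L torus_measure (fourier_char k)
          = set_lebesgue_integral lborel {-pi..<pi} (fourier_char k)"
    using set_integral_torus_eq[of "fourier_char k"] by (simp add: torus_def)
  also have "\<dots> = set_lebesgue_integral lborel {-pi..pi} (fourier_char k)"
    by (rule set_integral_discrete_difference[where X="{pi}"]) auto
  also have "\<dots> = (LBINT x=-pi..pi. fourier_char k x)"
    by (simp add: interval_integral_Icc)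
  also have "\<dots> = F (of_real pi) - F (of_real (-pi))"
    by (rule interval_integral_FTC_finite[where F="\<lambda>x. F (of_real x)"])
       (auto simp: fourier_char_def intro!: continuous_intros has_vector_derivative_real_field der)
  also have "\<dots> = 0"
  proof -
    have "exp (\<i> * of_int k * of_real pi) = cis (k * pi)"
      by (simp add: cis_conv_exp mult.commute mult.left_commute)
    moreover have "exp (\<i> * of_int k * of_real (-pi)) = cis (-(k * pi))"
      by (simp add: cis_conv_exp mult.commute mult.left_commute)
    moreover have "cis (k * pi) = cis (-(k*pi))"
      by (simp add: complex_eq_iff cos_minus mult.commute)
    ultimately show ?thesis unfolding F_def by simp
  qed
  finally show ?thesis using False by simp
qed

lemma integrable_mult_fourier_char: "integrable torus_measure (\<lambda>x. c * fourier_char k x)"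
  by (rule integrable_torus_measure_bounded[where B="norm c"]) (auto simp: norm_mult)

lemma integral_norm_trig_poly_square:
  assumes "finite A"
  shows "integral\<^sup>L torus_measure (\<lambda>x. (norm (\<Sum>n\<in>A. a n * fourier_char n x))^2)
           = 2 * pi * (\<Sum>n\<in>A. (norm (a n))^2)"
proof -
  define S where "S x = (\<Sum>n\<in>A. \<Sum>m\<in>A. a n * cnj (a m) * fourier_char (n - m) x)" for x
  have "complex_of_real ((norm (\<Sum>n\<in>A. a n * fourier_char n x))^2)
          = (\<Sum>n\<in>A. a n * fourier_char n x) * cnj (\<Sum>n\<in>A. a n * fourier_char n x)" for x
    by (rule complex_norm_square)
  also have "\<dots> x = S x" for x
    unfolding S_def cnj_sum sum_product
    by (intro sum.cong refl) (simp add: fourier_char_mult_cnj[symmetric] algebra_simps)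
  finally have square_eq: "(norm (\<Sum>n\<in>A. a n * fourier_char n x))^2 = Re (S x)" for x
    by (metis Re_complex_of_real)
  have "integral\<^sup>L torus_measure S
          = (\<Sum>n\<in>A. \<Sum>m\<in>A. a n * cnj (a m) * integral\<^sup>L torus_measure (fourier_char (n - m)))"
    unfolding S_def by (simp add: integral_sum integrable_mult_fourier_char integrable_sum)
  also have "\<dots> = (\<Sum>n\<in>A. \<Sum>m\<in>A. if m = n then a n * cnj (a m) * (2 * pi) else 0)"
    by (intro sum.cong refl) (simp add: integral_fourier_char)
  also have "\<dots> = (\<Sum>n\<in>A. of_real (2 * pi * (norm (a n))^2))"
    using assms by (intro sum.cong refl) (simp add: complex_norm_square[symmetric])
  finally have "integral\<^sup>L torus_measure S = of_real (2 * pi * (\<Sum>n\<in>A. (norm (a n))^2))"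
    by (simp add: sum_distrib_left)
  moreover have "integrable torus_measure S"
    unfolding S_def by (auto intro!: integrable_mult_fourier_char)
  ultimately show ?thesis unfolding square_eq by simp
qed

lemma cmod_diff_square: "(norm (u - v))^2 = (norm u)^2 - 2 * Re (u * cnj v) + (norm (v::complex))^2"
  by (simp only: cmod_power2) (simp add: power2_eq_square algebra_simps)

lemma integral_mult_cnj_partial_sum:
  assumes "f \<in> borel_measurable torus_measure" and "\<And>x. x \<in> torus \<Longrightarrow> norm (f x) \<le> B"
  shows "integral\<^sup>L torus_measure (\<lambda>x. f x * cnj (partial_sum A f x))
           = of_real (2 * pi * (\<Sum>n\<in>A. (norm (fourier_coeff f n))^2))"
proof -
  have integrable: "integrable torus_measure (\<lambda>x. f x * cnj (fourier_char n x))" for n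
    by (rule integrable_torus_measure_bounded[where B=B]) (use assms in \<open>auto simp: norm_mult\<close>)
  have "integral\<^sup>L torus_measure (\<lambda>x. f x * cnj (partial_sum A f x))
      = integral\<^sup>L torus_measure (\<lambda>x. \<Sum>n\<in>A. cnj (fourier_coeff f n) * (f x * cnj (fourier_char n x)))"
    unfolding partial_sum_eq cnj_sum by (simp add: sum_distrib_left algebra_simps)
  also have "\<dots> = (\<Sum>n\<in>A. cnj (fourier_coeff f n) * (2 * pi * fourier_coeff f n))"
    by (simp add: integral_sum integrable fourier_coeff_eq_integral)
  also have "\<dots> = (\<Sum>n\<in>A. of_real (2 * pi * (norm (fourier_coeff f n))^2))"
    by (intro sum.cong refl) (simp add: complex_norm_square[symmetric] mult.commute)
  finally show ?thesis by (simp add: sum_distrib_left)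
qed

lemma bessel_inequality:
  assumes "finite A" and f [measurable]: "f \<in> borel_measurable torus_measure"
    and B: "\<And>x. x \<in> torus \<Longrightarrow> norm (f x) \<le> B"
  shows "2 * pi * (\<Sum>n\<in>A. (norm (fourier_coeff f n))^2) \<le> integral\<^sup>L torus_measure (\<lambda>x. (norm (f x))^2)"
proof -
  define P where "P = partial_sum A f"
  define Q where "Q = 2 * pi * (\<Sum>n\<in>A. (norm (fourier_coeff f n))^2)"
  have [measurable]: "P \<in> borel_measurable torus_measure"
    unfolding P_def by (rule borel_measurable_partial_sum)
  have P_bound: "norm (P x) \<le> (\<Sum>n\<in>A. norm (fourier_coeff f n))" for x
    unfolding P_def by (rule norm_partial_sum_le)
  have B_nonneg: "0 \<le> B" using B[of 0] by (simp add: torus_def) (meson norm_ge_zero order_trans)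
  have int_f: "integrable torus_measure (\<lambda>x. (norm (f x))^2)"
    by (rule integrable_torus_measure_bounded[where B="B^2"]) (use B in \<open>auto intro: power_mono\<close>)
  have int_P: "integrable torus_measure (\<lambda>x. (norm (P x))^2)"
    unfolding P_def by (rule integrable_norm_partial_sum_square)
  have int_fP: "integrable torus_measure (\<lambda>x. f x * cnj (P x))"
    by (rule integrable_torus_measure_bounded[where B="B * (\<Sum>n\<in>A. norm (fourier_coeff f n))"])
       (use B P_bound B_nonneg in \<open>auto simp: norm_mult intro: mult_mono\<close>)
  define R where "R x = Re (f x * cnj (P x))" for x
  have int_R: "integrable torus_measure R" unfolding R_def by (rule integrable_Re[OF int_fP])
  have "0 \<le> integral\<^sup>L torus_measure (\<lambda>x. (norm (f x - P x))^2)" by simp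
  also have "\<dots> = integral\<^sup>L torus_measure (\<lambda>x. (norm (f x))^2 - 2 * R x + (norm (P x))^2)"
    unfolding R_def by (simp add: cmod_diff_square)
  also have "\<dots> = integral\<^sup>L torus_measure (\<lambda>x. (norm (f x))^2) - 2 * integral\<^sup>L torus_measure R
                   + integral\<^sup>L torus_measure (\<lambda>x. (norm (P x))^2)"
    using int_f int_P int_R by (simp add: Bochner_Integration.integral_add Bochner_Integration.integral_diff)
  also have "integral\<^sup>L torus_measure R = Re (integral\<^sup>L torus_measure (\<lambda>x. f x * cnj (P x)))"
    unfolding R_def by (rule integral_Re[OF int_fP])
  also have "Re (integral\<^sup>L torus_measure (\<lambda>x. f x * cnj (P x))) = Q"
    using integral_mult_cnj_partial_sum[OF f B, of A] unfolding P_def Q_def by simp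
  also have "integral\<^sup>L torus_measure (\<lambda>x. (norm (P x))^2) = Q"
    unfolding P_def Q_def partial_sum_eq by (rule integral_norm_trig_poly_square[OF assms(1)])
  finally show ?thesis unfolding Q_def by simp
qed

lemma integrable_mult_cnj_fourier_char:
  assumes "integrable torus_measure h"
  shows "integrable torus_measure (\<lambda>x. h x * cnj (fourier_char n x))"
proof -
  have [measurable]: "h \<in> borel_measurable torus_measure" using assms by (rule borel_measurable_integrable)
  show ?thesis by (rule Bochner_Integration.integrable_bound[OF assms]) (measurable, simp add: norm_mult)
qed

lemma norm_fourier_coeff_le:
  assumes "integrable torus_measure h"
  shows "norm (fourier_coeff h n) \<le> integral\<^sup>L torus_measure (\<lambda>x. norm (h x)) / (2 * pi)"
proof -
  have "norm (integral\<^sup>L torus_measure (\<lambda>x. h x * cnj (fourier_char n x)))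
          \<le> integral\<^sup>L torus_measure (\<lambda>x. norm (h x * cnj (fourier_char n x)))"
    by (rule integral_norm_bound)
  then show ?thesis
    unfolding fourier_coeff_eq_integral by (simp add: norm_mult norm_divide divide_right_mono)
qed

lemma fourier_coeff_add:
  assumes "integrable torus_measure f" "integrable torus_measure g"
  shows "fourier_coeff (\<lambda>x. f x + g x) n = fourier_coeff f n + fourier_coeff g n"
  unfolding fourier_coeff_eq_integral distrib_right
  by (simp add: Bochner_Integration.integral_add integrable_mult_cnj_fourier_char assms distrib_left)

lemma partial_sum_divide: "partial_sum A (\<lambda>x. g x / of_real l) x = partial_sum A g x / of_real l"
proof -
  have "fourier_coeff (\<lambda>x. g x / of_real l) n = fourier_coeff g n / of_real l" for n
    unfolding fourier_coeff_eq_integral by (simp add: integral_divide_zero)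
  then show ?thesis unfolding partial_sum_def by (simp add: sum_divide_distrib)
qed

section \<open>Young functions and the Luxemburg norm\<close>

lemma young_function_zero: "young_function \<Phi> \<Longrightarrow> \<Phi> 0 = 0"
  unfolding young_function_def by simp

lemma young_function_mono: "young_function \<Phi> \<Longrightarrow> 0 \<le> s \<Longrightarrow> s \<le> t \<Longrightarrow> \<Phi> s \<le> \<Phi> t"
  unfolding young_function_def by (auto simp: mono_on_def)

lemma young_function_nonneg: "young_function \<Phi> \<Longrightarrow> 0 \<le> t \<Longrightarrow> 0 \<le> \<Phi> t"
  using young_function_mono[of \<Phi> 0 t] young_function_zero[of \<Phi>] by simp

lemma young_function_mult_le_mult:
  assumes "young_function \<Phi>" and "0 < s" "s \<le> t"
  shows "\<Phi> s * t \<le> \<Phi> t * s"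
proof -
  have "\<Phi> ((1 - s/t) *\<^sub>R 0 + (s/t) *\<^sub>R t) \<le> (1 - s/t) * \<Phi> 0 + (s/t) * \<Phi> t"
    using assms unfolding young_function_def by (intro convex_onD) auto
  then have "\<Phi> s \<le> (s/t) * \<Phi> t" using assms young_function_zero[OF assms(1)] by simp
  then show ?thesis using assms by (simp add: field_simps)
qed

lemma young_function_small:
  assumes "young_function \<Phi>" and "\<epsilon> > 0"
  obtains d where "d > 0" "\<Phi> d \<le> \<epsilon>"
proof -
  have "continuous_on {0..} \<Phi>" using assms unfolding young_function_def by simp
  then obtain e where "e > 0" and e: "\<And>x. x \<ge> 0 \<Longrightarrow> dist x 0 < e \<Longrightarrow> dist (\<Phi> x) (\<Phi> 0) < \<epsilon>"
    using assms(2) unfolding continuous_on_iff by (metis atLeast_iff order_refl)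
  then have "dist (\<Phi> (e/2)) (\<Phi> 0) < \<epsilon>" by (intro e) auto
  then have "\<Phi> (e/2) \<le> \<epsilon>" using young_function_zero[OF assms(1)] by (simp add: dist_real_def)
  with \<open>e > 0\<close> show ?thesis by (intro that[of "e/2"]) auto
qed

lemma borel_measurable_young_function_norm [measurable]:
  assumes "young_function \<Phi>" and "F \<in> borel_measurable M"
  shows "(\<lambda>x. \<Phi> (norm (F x :: complex))) \<in> borel_measurable M"
proof -
  have "continuous_on {0..} \<Phi>" using assms unfolding young_function_def by simp
  then have "continuous_on UNIV (\<lambda>t. \<Phi> (max 0 t))"
    by (rule continuous_on_compose2) (auto intro!: continuous_intros)
  then have "(\<lambda>x. \<Phi> (max 0 (norm (F x)))) \<in> borel_measurable M"
    by (rule borel_measurable_continuous_on) (use assms in measurable)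
  then show ?thesis by simp
qed

lemma luxemburg_norm_le:
  assumes "s > 0" "orlicz_modular \<Phi> (\<lambda>x. F x / of_real s) \<le> 1"
  shows "luxemburg_norm \<Phi> F \<le> s"
  unfolding luxemburg_norm_def
  by (rule cInf_lower) (use assms in \<open>auto intro: bdd_belowI[where m=0]\<close>)

lemma luxemburg_norm_nonneg:
  assumes "g \<in> orlicz_space \<Phi>"
  shows "luxemburg_norm \<Phi> g \<ge> 0"
proof -
  have "{l. l > 0 \<and> orlicz_modular \<Phi> (\<lambda>x. g x / of_real l) \<le> 1} \<noteq> {}"
    using assms unfolding orlicz_space_def by blast
  then show ?thesis unfolding luxemburg_norm_def by (rule cInf_greatest) (blast intro: less_imp_le)
qed

lemma orlicz_modular_le_one:
  assumes "young_function \<Phi>" and "g \<in> orlicz_space \<Phi>" and "l > luxemburg_norm \<Phi> g"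
  shows "orlicz_modular \<Phi> (\<lambda>x. g x / of_real l) \<le> 1"
proof -
  define S where "S = {l. l > 0 \<and> orlicz_modular \<Phi> (\<lambda>x. g x / of_real l) \<le> 1}"
  have "S \<noteq> {}" using assms(2) unfolding orlicz_space_def S_def by auto
  moreover have "bdd_below S" unfolding S_def by (auto intro: bdd_belowI[where m=0])
  moreover have "Inf S < l" using assms(3) unfolding luxemburg_norm_def S_def .
  ultimately obtain l' where "l' \<in> S" "l' < l" using cInf_less_iff by auto
  then have l': "0 < l'" "l' < l" "orlicz_modular \<Phi> (\<lambda>x. g x / of_real l') \<le> 1"
    unfolding S_def by auto
  have "orlicz_modular \<Phi> (\<lambda>x. g x / of_real l) \<le> orlicz_modular \<Phi> (\<lambda>x. g x / of_real l')"
    unfolding orlicz_modular_eq_nn_integral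
  proof (rule nn_integral_mono, rule ennreal_leI)
    fix x
    have "norm (g x) / l \<le> norm (g x) / l'" using l' by (intro divide_left_mono) auto
    then show "\<Phi> (norm (g x / of_real l)) \<le> \<Phi> (norm (g x / of_real l'))"
      using l' assms(1) by (simp add: norm_divide young_function_mono)
  qed
  with l' show ?thesis by simp
qed

lemma integral_le_of_le_orlicz_modular:
  fixes h :: "real \<Rightarrow> complex" and f :: "real \<Rightarrow> real"
  assumes "young_function \<Phi>" and [measurable]: "h \<in> borel_measurable torus_measure"
    and [measurable]: "f \<in> borel_measurable torus_measure"
    and "orlicz_modular \<Phi> h \<le> 1" and "c \<ge> 0"
    and f: "\<And>x. 0 \<le> f x" "\<And>x. f x \<le> c * \<Phi> (norm (h x))"
  shows "integrable torus_measure f" "integral\<^sup>L torus_measure f \<le> c"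
proof -
  have "(\<integral>\<^sup>+x. ennreal (f x) \<partial>torus_measure)
          \<le> (\<integral>\<^sup>+x. ennreal c * ennreal (\<Phi> (norm (h x))) \<partial>torus_measure)"
    using assms young_function_nonneg[OF assms(1)]
    by (intro nn_integral_mono) (simp add: ennreal_mult[symmetric] ennreal_leI)
  also have "\<dots> = ennreal c * orlicz_modular \<Phi> h"
    unfolding orlicz_modular_eq_nn_integral using assms(1) by (intro nn_integral_cmult) measurable
  also have "\<dots> \<le> ennreal c" using assms(4) mult_left_mono[of _ 1 "ennreal c"] by simp
  finally have nn: "(\<integral>\<^sup>+x. ennreal (f x) \<partial>torus_measure) \<le> ennreal c" .
  show int: "integrable torus_measure f"
    using nn f(1) by (intro integrableI_bounded) (auto simp: top_unique order_le_less_trans)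
  have "ennreal (integral\<^sup>L torus_measure f) = (\<integral>\<^sup>+x. ennreal (f x) \<partial>torus_measure)"
    using int f(1) by (intro nn_integral_eq_integral[symmetric]) auto
  with nn have "ennreal (integral\<^sup>L torus_measure f) \<le> ennreal c" by simp
  then show "integral\<^sup>L torus_measure f \<le> c" using assms(5) by (subst (asm) ennreal_le_iff) auto
qed

lemma integral_norm_above_level_le:
  assumes "young_function \<Phi>" and [measurable]: "h \<in> borel_measurable torus_measure"
    and "orlicz_modular \<Phi> h \<le> 1" "l > 0" "\<Phi> l > 0"
  shows "integrable torus_measure (\<lambda>x. if l < norm (h x) then h x else 0)"
    and "integral\<^sup>L torus_measure (\<lambda>x. norm (if l < norm (h x) then h x else 0)) \<le> l / \<Phi> l"
proof -
  have le: "norm (if l < norm (h x) then h x else 0) \<le> (l / \<Phi> l) * \<Phi> (norm (h x))" for x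
  proof (cases "l < norm (h x)")
    case True
    then have "\<Phi> l * norm (h x) \<le> \<Phi> (norm (h x)) * l"
      using assms by (intro young_function_mult_le_mult) auto
    then show ?thesis using True assms by (simp add: field_simps)
  qed (use assms young_function_nonneg[OF assms(1)] in simp)
  have meas: "(\<lambda>x. norm (if l < norm (h x) then h x else 0)) \<in> borel_measurable torus_measure"
    by measurable
  have "l / \<Phi> l \<ge> 0" using assms by simp
  note L1 = integral_le_of_le_orlicz_modular[OF assms(1,2) meas assms(3) this norm_ge_zero le]
  show "integral\<^sup>L torus_measure (\<lambda>x. norm (if l < norm (h x) then h x else 0)) \<le> l / \<Phi> l"
    by (rule L1(2))
  show "integrable torus_measure (\<lambda>x. if l < norm (h x) then h x else 0)"
    by (rule integrable_norm_cancel[OF L1(1)]) measurable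
qed

lemma norm_add_power2_le:
  fixes a b :: "'a::real_normed_vector"
  shows "(norm (a + b))^2 \<le> 2 * (norm a)^2 + 2 * (norm b)^2"
proof -
  have "(norm (a + b))^2 \<le> (norm a + norm b)^2" by (intro power_mono norm_triangle_ineq) auto
  also have "\<dots> \<le> 2 * (norm a)^2 + 2 * (norm b)^2"
    using sum_squares_bound[of "norm a" "norm b"] by (simp add: power2_sum)
  finally show ?thesis .
qed

section \<open>Partial sums for Young functions of upper type 2\<close>

locale upper_type_2_young_function =
  fixes \<Phi> :: "real \<Rightarrow> real" and K :: real
  assumes young: "young_function \<Phi>"
    and K_pos: "0 < K"
    and upper_type_2: "\<And>r t. 1 \<le> r \<Longrightarrow> 0 \<le> t \<Longrightarrow> \<Phi> (r * t) \<le> K * r^2 * \<Phi> t"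
begin

lemma quadratic_majorant:
  assumes "d > 0" "t \<ge> 0"
  shows "\<Phi> t \<le> \<Phi> d + (K * \<Phi> d / d^2) * t^2"
proof (cases "t \<le> d")
  case True
  then have "\<Phi> t \<le> \<Phi> d" using assms young young_function_mono by blast
  moreover have "0 \<le> (K * \<Phi> d / d^2) * t^2"
    using K_pos young_function_nonneg[OF young, of d] assms by simp
  ultimately show ?thesis by linarith
next
  case False
  have "\<Phi> t = \<Phi> ((t / d) * d)" using assms by simp
  also have "\<dots> \<le> K * (t / d)^2 * \<Phi> d" using False assms by (intro upper_type_2) auto
  also have "\<dots> = (K * \<Phi> d / d^2) * t^2" by (simp add: power_divide)
  finally show ?thesis using young_function_nonneg[OF young, of d] assms by simp
qed

lemma integral_square_below_level_le:
  assumes [measurable]: "h \<in> borel_measurable torus_measure"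
    and "orlicz_modular \<Phi> h \<le> 1" "l > 0" "\<Phi> l > 0"
  shows "integral\<^sup>L torus_measure (\<lambda>x. (norm (if l < norm (h x) then 0 else h x))^2) \<le> K * l^2 / \<Phi> l"
proof -
  have le: "(norm (if l < norm (h x) then 0 else h x))^2 \<le> (K * l^2 / \<Phi> l) * \<Phi> (norm (h x))" for x
  proof (cases "l < norm (h x) \<or> h x = 0")
    case False
    define t where "t = norm (h x)"
    have t: "0 < t" "t \<le> l" using False unfolding t_def by auto
    have "\<Phi> l = \<Phi> ((l / t) * t)" using t by simp
    also have "\<dots> \<le> K * (l / t)^2 * \<Phi> t" using t by (intro upper_type_2) auto
    finally have "\<Phi> l * t^2 \<le> K * l^2 * \<Phi> t" using t by (simp add: field_simps)
    then show ?thesis using assms t False unfolding t_def by (simp add: field_simps)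
  next
    case True
    then have "norm (if l < norm (h x) then 0 else h x) = 0" by auto
    moreover have "0 \<le> (K * l^2 / \<Phi> l) * \<Phi> (norm (h x))"
      using assms K_pos young_function_nonneg[OF young] by simp
    ultimately show ?thesis by simp
  qed
  have meas: "(\<lambda>x. (norm (if l < norm (h x) then 0 else h x))^2) \<in> borel_measurable torus_measure"
    by measurable
  have "K * l^2 / \<Phi> l \<ge> 0" using assms K_pos by simp
  from integral_le_of_le_orlicz_modular[OF young assms(1) meas assms(2) this zero_le_power2 le]
  show ?thesis by blast
qed

lemma integral_norm_partial_sum_square_le_level:
  assumes [measurable]: "h \<in> borel_measurable torus_measure" and "orlicz_modular \<Phi> h \<le> 1"
    and "l > 0" "\<Phi> l > 0" "finite A"
  shows "integral\<^sup>L torus_measure (\<lambda>x. (norm (partial_sum A h x))^2)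
           \<le> real (card A) * l^2 / (pi * (\<Phi> l)^2) + 2 * K * l^2 / \<Phi> l"
proof -
  define h1 where "h1 x = (if l < norm (h x) then h x else 0)" for x
  define h2 where "h2 x = (if l < norm (h x) then 0 else h x)" for x
  have [measurable]: "h1 \<in> borel_measurable torus_measure" "h2 \<in> borel_measurable torus_measure"
    unfolding h1_def h2_def by measurable
  have h2_le: "norm (h2 x) \<le> l" for x unfolding h2_def using assms by auto
  have int_h1: "integrable torus_measure h1"
    and L1_h1: "integral\<^sup>L torus_measure (\<lambda>x. norm (h1 x)) \<le> l / \<Phi> l"
    unfolding h1_def using integral_norm_above_level_le[OF young assms(1-4)] by auto
  have L2_h2: "integral\<^sup>L torus_measure (\<lambda>x. (norm (h2 x))^2) \<le> K * l^2 / \<Phi> l"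
    unfolding h2_def using integral_square_below_level_le[OF assms(1-4)] .
  have int_h2: "integrable torus_measure h2"
    by (rule integrable_torus_measure_bounded[where B=l]) (use h2_le in auto)
  have coeff_h1: "norm (fourier_coeff h1 n) \<le> l / (2 * pi * \<Phi> l)" for n
  proof -
    have "norm (fourier_coeff h1 n) \<le> (l / \<Phi> l) / (2 * pi)"
      using norm_fourier_coeff_le[OF int_h1, of n] L1_h1 by (smt (verit) divide_right_mono pi_gt_zero)
    then show ?thesis by (simp add: mult.commute)
  qed
  have S1: "(\<Sum>n\<in>A. (norm (fourier_coeff h1 n))^2) \<le> real (card A) * (l / (2 * pi * \<Phi> l))^2"
    using sum_mono[of A "\<lambda>n. (norm (fourier_coeff h1 n))^2" "\<lambda>_. (l / (2 * pi * \<Phi> l))^2"]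
      coeff_h1 by (simp add: power_mono)
  have S2: "2 * pi * (\<Sum>n\<in>A. (norm (fourier_coeff h2 n))^2) \<le> K * l^2 / \<Phi> l"
    using bessel_inequality[OF assms(5), of h2 l] h2_le L2_h2 by simp
  have coeff_split: "(norm (fourier_coeff h n))^2
      \<le> 2 * (norm (fourier_coeff h1 n))^2 + 2 * (norm (fourier_coeff h2 n))^2" for n
  proof -
    have "fourier_coeff h n = fourier_coeff h1 n + fourier_coeff h2 n"
      using fourier_coeff_add[OF int_h1 int_h2, of n] unfolding h1_def h2_def
      by (simp add: if_distrib cong: if_cong)
    then show ?thesis by (simp add: norm_add_power2_le)
  qed
  have "2 * pi * (\<Sum>n\<in>A. (norm (fourier_coeff h n))^2)
      \<le> 2 * pi * (\<Sum>n\<in>A. 2 * (norm (fourier_coeff h1 n))^2 + 2 * (norm (fourier_coeff h2 n))^2)"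
    using coeff_split by (intro mult_left_mono sum_mono) auto
  also have "\<dots> = 4 * pi * (\<Sum>n\<in>A. (norm (fourier_coeff h1 n))^2)
                   + 2 * (2 * pi * (\<Sum>n\<in>A. (norm (fourier_coeff h2 n))^2))"
    by (simp add: sum.distrib sum_distrib_left algebra_simps)
  also have "\<dots> \<le> 4 * pi * (real (card A) * (l / (2 * pi * \<Phi> l))^2) + 2 * (K * l^2 / \<Phi> l)"
    using S1 S2 by (intro add_mono mult_left_mono) auto
  also have "4 * pi * (real (card A) * (l / (2 * pi * \<Phi> l))^2) = real (card A) * l^2 / (pi * (\<Phi> l)^2)"
    by (simp add: power2_eq_square field_simps)
  finally show ?thesis
    unfolding partial_sum_eq integral_norm_trig_poly_square[OF assms(5)] by simp
qed

lemma integral_norm_partial_sum_square_le: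
  assumes "h \<in> borel_measurable torus_measure" "orlicz_modular \<Phi> h \<le> 1"
    and "l > 0" "N \<ge> 1" "N \<le> \<Phi> l" "finite A" "real (card A) \<le> N"
  shows "integral\<^sup>L torus_measure (\<lambda>x. (norm (partial_sum A h x))^2) \<le> (1/pi + 2 * K) * l^2 / N"
proof -
  have "real (card A) * l^2 / (pi * (\<Phi> l)^2) \<le> N * l^2 / (pi * N^2)"
    using assms by (intro frac_le mult_right_mono mult_left_mono power_mono) auto
  also have "\<dots> = l^2 / (pi * N)" by (simp add: power2_eq_square)
  finally have "real (card A) * l^2 / (pi * (\<Phi> l)^2) + 2 * K * l^2 / \<Phi> l \<le> l^2 / (pi * N) + 2 * K * l^2 / N"
    using assms K_pos by (intro add_mono divide_left_mono) auto
  also have "\<dots> = (1/pi + 2 * K) * l^2 / N" using assms by (simp add: field_simps)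
  finally have "real (card A) * l^2 / (pi * (\<Phi> l)^2) + 2 * K * l^2 / \<Phi> l \<le> (1/pi + 2 * K) * l^2 / N" .
  then show ?thesis
    using integral_norm_partial_sum_square_le_level[OF assms(1,2,3)] assms by fastforce
qed

lemma orlicz_modular_le_one_of_L2:
  assumes [measurable]: "F \<in> borel_measurable torus_measure"
    and int_F: "integrable torus_measure (\<lambda>x. (norm (F x))^2)"
    and "d > 0" "2 * pi * \<Phi> d \<le> 1/2" "s > 0"
    and "(K * \<Phi> d / d^2) * integral\<^sup>L torus_measure (\<lambda>x. (norm (F x))^2) / s^2 \<le> 1/2"
  shows "orlicz_modular \<Phi> (\<lambda>x. F x / of_real s) \<le> 1"
proof -
  define c where "c = K * \<Phi> d / d^2 / s^2"
  define G where "G x = \<Phi> d + c * (norm (F x))^2" for x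
  have c: "c \<ge> 0" unfolding c_def using K_pos young_function_nonneg[OF young, of d] assms by simp
  have int_G: "integrable torus_measure G"
    unfolding G_def
    by (intro Bochner_Integration.integrable_add integrable_mult_right int_F
        finite_measure.integrable_const[OF finite_measure_torus_measure])
  have "integral\<^sup>L torus_measure G = 2 * pi * \<Phi> d + c * integral\<^sup>L torus_measure (\<lambda>x. (norm (F x))^2)"
    unfolding G_def using int_F measure_torus_measure
    by (simp add: finite_measure.integrable_const[OF finite_measure_torus_measure] mult.commute)
  also have "\<dots> \<le> 1"
  proof -
    have "c * integral\<^sup>L torus_measure (\<lambda>x. (norm (F x))^2)
            = (K * \<Phi> d / d^2) * integral\<^sup>L torus_measure (\<lambda>x. (norm (F x))^2) / s^2"
      unfolding c_def by simp
    then show ?thesis using assms(4,6) by linarith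
  qed
  finally have G_le: "integral\<^sup>L torus_measure G \<le> 1" .
  have "orlicz_modular \<Phi> (\<lambda>x. F x / of_real s) \<le> (\<integral>\<^sup>+x. ennreal (G x) \<partial>torus_measure)"
    unfolding orlicz_modular_eq_nn_integral
  proof (rule nn_integral_mono, rule ennreal_leI)
    fix x
    have "\<Phi> (norm (F x / of_real s)) = \<Phi> (norm (F x) / s)" using assms by (simp add: norm_divide)
    also have "\<dots> \<le> \<Phi> d + (K * \<Phi> d / d^2) * (norm (F x) / s)^2"
      using assms by (intro quadratic_majorant) auto
    finally show "\<Phi> (norm (F x / of_real s)) \<le> G x" unfolding G_def c_def by (simp add: power_divide)
  qed
  also have "\<dots> = ennreal (integral\<^sup>L torus_measure G)"
    using c young_function_nonneg[OF young, of d] assms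
    by (intro nn_integral_eq_integral int_G) (auto simp: G_def)
  also have "\<dots> \<le> 1" using G_le by simp
  finally show ?thesis .
qed

lemma luxemburg_norm_partial_sum_le_of_level:
  assumes "d > 0" "2 * pi * \<Phi> d \<le> 1/2" "C > 0" "2 * (K * \<Phi> d / d^2) * (1/pi + 2 * K) \<le> C^2"
    and "l > 0" "N \<ge> 1" "N \<le> \<Phi> l" "finite A" "real (card A) \<le> N" "g \<in> orlicz_space \<Phi>"
  shows "luxemburg_norm \<Phi> (partial_sum A g) \<le> C * l / sqrt N * luxemburg_norm \<Phi> g"
proof -
  define s where "s = C * l / sqrt N"
  have s: "s > 0" unfolding s_def using assms by simp
  have [measurable]: "g \<in> borel_measurable torus_measure"
    using assms(10) unfolding orlicz_space_def by (auto intro: measurable_restrict_space1)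
  have "luxemburg_norm \<Phi> (partial_sum A g) / s \<le> luxemburg_norm \<Phi> g"
  proof (rule dense_ge)
    fix r assume r: "luxemburg_norm \<Phi> g < r"
    then have "r > 0" using luxemburg_norm_nonneg[OF assms(10)] by simp
    define h where "h x = g x / of_real r" for x
    have [measurable]: "h \<in> borel_measurable torus_measure" unfolding h_def by measurable
    have "orlicz_modular \<Phi> h \<le> 1"
      unfolding h_def using orlicz_modular_le_one[OF young assms(10) r] .
    then have L2: "integral\<^sup>L torus_measure (\<lambda>x. (norm (partial_sum A h x))^2) \<le> (1/pi + 2 * K) * l^2 / N"
      using assms by (intro integral_norm_partial_sum_square_le) auto
    have s2: "s^2 = C^2 * l^2 / N" unfolding s_def using assms by (simp add: power_divide power_mult_distrib)
    have "(K * \<Phi> d / d^2) * ((1/pi + 2 * K) * l^2 / N) / s^2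
                 = 2 * (K * \<Phi> d / d^2) * (1/pi + 2 * K) / (2 * C^2)"
      unfolding s2 using assms by (simp add: field_simps)
    also have "\<dots> \<le> 1/2" using assms by (simp add: field_simps)
    finally have "(K * \<Phi> d / d^2) * ((1/pi + 2 * K) * l^2 / N) / s^2 \<le> 1/2" .
    moreover have "0 \<le> K * \<Phi> d / d^2"
      using assms K_pos young_function_nonneg[OF young, of d] by simp
    ultimately have "(K * \<Phi> d / d^2) * integral\<^sup>L torus_measure (\<lambda>x. (norm (partial_sum A h x))^2) / s^2
                       \<le> 1/2"
      using L2 s by (smt (verit) divide_right_mono mult_left_mono zero_le_power2)
    then have "orlicz_modular \<Phi> (\<lambda>x. partial_sum A h x / of_real s) \<le> 1"
      using assms s by (intro orlicz_modular_le_one_of_L2 integrable_norm_partial_sum_square) auto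
    moreover have "partial_sum A h x / of_real s = partial_sum A g x / of_real (s * r)" for x
      unfolding h_def partial_sum_divide by simp
    ultimately have "luxemburg_norm \<Phi> (partial_sum A g) \<le> s * r"
      using s \<open>r > 0\<close> by (intro luxemburg_norm_le) auto
    then show "luxemburg_norm \<Phi> (partial_sum A g) / s \<le> r" using s by (simp add: field_simps)
  qed
  then have "luxemburg_norm \<Phi> (partial_sum A g) \<le> s * luxemburg_norm \<Phi> g"
    using s by (simp add: pos_divide_le_eq mult.commute)
  then show ?thesis unfolding s_def .
qed

lemma luxemburg_norm_partial_sum_le:
  obtains C where "C > 0"
    and "\<And>N l A g. N \<ge> 1 \<Longrightarrow> l > 0 \<Longrightarrow> N \<le> \<Phi> l \<Longrightarrow> finite A \<Longrightarrow> real (card A) \<le> N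
           \<Longrightarrow> g \<in> orlicz_space \<Phi>
           \<Longrightarrow> luxemburg_norm \<Phi> (partial_sum A g) \<le> C * l / sqrt N * luxemburg_norm \<Phi> g"
proof -
  obtain d where d: "d > 0" "\<Phi> d \<le> 1 / (4 * pi)"
    using young_function_small[OF young, of "1 / (4 * pi)"] by auto
  define C where "C = sqrt (2 * (K * \<Phi> d / d^2) * (1/pi + 2 * K)) + 1"
  have nonneg: "0 \<le> 2 * (K * \<Phi> d / d^2) * (1/pi + 2 * K)"
    using K_pos d young_function_nonneg[OF young, of d] by simp
  then have "C > 0" unfolding C_def by (simp add: add_nonneg_pos)
  moreover have "2 * (K * \<Phi> d / d^2) * (1/pi + 2 * K) \<le> C^2"
    using nonneg unfolding C_def by (metis real_sqrt_pow2 power_mono real_sqrt_ge_zero le_add_same_cancel1 zero_le_one)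
  moreover have "2 * pi * \<Phi> d \<le> 1/2" using d by (simp add: field_simps)
  ultimately show ?thesis
    using d by (intro that luxemburg_norm_partial_sum_le_of_level) auto
qed

end

theorem lemma5p5:
  fixes p \<alpha> c :: real
  assumes hp: "(1 < p \<and> p < 2) \<or> (p = 2 \<and> \<alpha> \<le> 0)"
    and hc: "c > 1" and hY: "young_function (PhiLlog p \<alpha> c)"
  shows "\<exists>C>0. \<forall>N::nat. N \<ge> 1 \<longrightarrow>
           (\<forall>A::int set. finite A \<and> card A \<le> N \<longrightarrow>
             (\<forall>g \<in> orlicz_space (PhiLlog p \<alpha> c).
                luxemburg_norm (PhiLlog p \<alpha> c) (partial_sum A g)
                  \<le> C * real N powr (1 / p - 1 / 2) * (ln (exp 1 + real N)) powr (- \<alpha>)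
                    * luxemburg_norm (PhiLlog p \<alpha> c) g))"
proof -
  obtain K where "K > 0" "\<forall>r\<ge>1. \<forall>t\<ge>0. PhiLlog p \<alpha> c (r * t) \<le> K * r^2 * PhiLlog p \<alpha> c t"
    using PhiLlog_upper_type_2[OF hp hc] by blast
  then interpret upper_type_2_young_function "PhiLlog p \<alpha> c" K
    using hY by unfold_locales auto
  obtain C where C: "C > 0" and norm_le: "\<And>N l A g. N \<ge> 1 \<Longrightarrow> l > 0 \<Longrightarrow> N \<le> PhiLlog p \<alpha> c l
      \<Longrightarrow> finite A \<Longrightarrow> real (card A) \<le> N \<Longrightarrow> g \<in> orlicz_space (PhiLlog p \<alpha> c)
      \<Longrightarrow> luxemburg_norm (PhiLlog p \<alpha> c) (partial_sum A g)
            \<le> C * l / sqrt N * luxemburg_norm (PhiLlog p \<alpha> c) g"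
    using luxemburg_norm_partial_sum_le by blast
  obtain M where M: "M > 0"
    "\<And>N. N \<ge> 1 \<Longrightarrow> N \<le> PhiLlog p \<alpha> c (M * N powr (1/p) * ln (exp 1 + N) powr (- \<alpha>))"
    using PhiLlog_inverse_bound[OF hp hc] by blast
  have "luxemburg_norm (PhiLlog p \<alpha> c) (partial_sum A g)
          \<le> (C * M) * real N powr (1/p - 1/2) * ln (exp 1 + real N) powr (- \<alpha>)
              * luxemburg_norm (PhiLlog p \<alpha> c) g"
    if "N \<ge> 1" "finite A" "card A \<le> N" "g \<in> orlicz_space (PhiLlog p \<alpha> c)" for N :: nat and A g
  proof -
    define l where "l = M * real N powr (1/p) * ln (exp 1 + real N) powr (- \<alpha>)"
    have "l > 0" unfolding l_def using M that ln_exp1_add_bounds(1)[of "real N"] by simp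
    then have "luxemburg_norm (PhiLlog p \<alpha> c) (partial_sum A g)
                 \<le> C * (l / sqrt N) * luxemburg_norm (PhiLlog p \<alpha> c) g"
      using norm_le[of N l A g] M(2)[of N] that unfolding l_def by simp
    also have "l / sqrt N = M * real N powr (1/p - 1/2) * ln (exp 1 + real N) powr (- \<alpha>)"
      unfolding l_def using that by (simp add: powr_diff powr_half_sqrt)
    finally show ?thesis by (simp add: ac_simps)
  qed
  then show ?thesis using C M by (intro exI[of _ "C * M"]) auto
qed

end
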